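(* Let $\beta>2\alpha>0$ with $\beta+2\alpha>1$ and $t\in\mathbb{R}^{s_N}$. For all $r>0$ sufficiently small (depending on $A$), $$\frac{J_N(t,r,\overrightarrow{m}^* )}{J_N(0,r,\overrightarrow{m}^* )}=\mathbb{E}_{\rho_N}\big[\exp\{t^TX\}\big],$$ where $X$ is an $s_N$-dimensional random variable whose distribution is strongly log-concave with density $$\rho_N(x)\propto\exp\Big\{-\tfrac{N}{s_N}\Big(\varphi_N\Big(\overrightarrow{m}^*+\sqrt{\tfrac{s_N}{N}}x\Big)-\varphi_N(\overrightarrow{m}^* )\Big)\Big\}\mathbf{1}_{[-\sqrt{N/s_N}\,r,\ \sqrt{N/s_N}\,r]^{s_N}}(x).$$
   Context: $A=\beta I+\alpha(P+P^T)$ is the $s_N\times s_N$ symmetric circulant matrix ($P$ the cyclic shift), $e_k$ the standard basis of $\mathbb{R}^{s_N}$, and $\varphi_N(x)=\frac12x^TAx-\sum_{k=1}^{s_N}\log\cosh(x^TAe_k)$. $m^*$ is the largest solution of $x=\tanh((\beta+2\alpha)x)$ and $\overrightarrow{m}^*=(m^*,\dots,m^* )\in\mathbb{R}^{s_N}$. For $t\in\mathbb{R}^{s_N}$ and $r>0$, $$J_N(t,r,\overrightarrow{m}^* )=\Big(\tfrac{N}{s_N}\Big)^{s_N/2}\exp\Big\{\tfrac{N}{s_N}\varphi_N(\overrightarrow{m}^* )-\sqrt{\tfrac{N}{s_N}}t^T\overrightarrow{m}^*\Big\}\int_{[m^*-r,m^*+r]^{s_N}}\exp\Big\{-\tfrac{N}{s_N}\varphi_N(x)+\sqrt{\tfrac{N}{s_N}}t^Tx\Big\}\mathrm{d}^{s_N}x.$$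 A distribution is strongly log-concave if it has a density $e^{-U}$ with $U$ strongly convex. *)

theory Defs
  imports "HOL-Probability.Probability"
begin

text \<open>Vectors of \<open>\<real>^s\<close> are represented as functions \<open>nat \<Rightarrow> real\<close> restricted to
  indices \<open>{..<s}\<close>; Lebesgue measure on \<open>\<real>^s\<close> is the product measure \<open>lebesgue_s s\<close>.\<close>

definition lebesgue_s :: "nat \<Rightarrow> (nat \<Rightarrow> real) measure" where
  "lebesgue_s s = (\<Pi>\<^sub>M i\<in>{..<s}. lborel)"

text \<open>Entries of \<open>A = \<beta> I + \<alpha> (P + P^T)\<close>, \<open>P\<close> the cyclic shift \<open>(P)_{i,j} = [j = i+1 mod s]\<close>.\<close>
definition Amat :: "real \<Rightarrow> real \<Rightarrow> nat \<Rightarrow> nat \<Rightarrow> nat \<Rightarrow> real" where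
  "Amat \<alpha> \<beta> s i j =
     \<beta> * (if i = j then 1 else 0)
     + \<alpha> * ((if j = (i + 1) mod s then 1 else 0) + (if i = (j + 1) mod s then 1 else 0))"

definition xAe :: "real \<Rightarrow> real \<Rightarrow> nat \<Rightarrow> (nat \<Rightarrow> real) \<Rightarrow> nat \<Rightarrow> real" where
  "xAe \<alpha> \<beta> s x k = (\<Sum>i<s. x i * Amat \<alpha> \<beta> s i k)"

definition phiN :: "real \<Rightarrow> real \<Rightarrow> nat \<Rightarrow> (nat \<Rightarrow> real) \<Rightarrow> real" where
  "phiN \<alpha> \<beta> s x =
     (1/2) * (\<Sum>i<s. \<Sum>j<s. x i * Amat \<alpha> \<beta> s i j * x j)
     - (\<Sum>k<s. ln (cosh (xAe \<alpha> \<beta> s x k)))"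

definition mstar :: "real \<Rightarrow> real \<Rightarrow> real" where
  "mstar \<alpha> \<beta> = (GREATEST x. x = tanh ((\<beta> + 2 * \<alpha>) * x))"

definition mvec :: "real \<Rightarrow> real \<Rightarrow> nat \<Rightarrow> nat \<Rightarrow> real" where
  "mvec \<alpha> \<beta> s = (\<lambda>i. if i < s then mstar \<alpha> \<beta> else undefined)"

definition inner_s :: "nat \<Rightarrow> (nat \<Rightarrow> real) \<Rightarrow> (nat \<Rightarrow> real) \<Rightarrow> real" where
  "inner_s s t x = (\<Sum>i<s. t i * x i)"

definition cube :: "nat \<Rightarrow> real \<Rightarrow> real \<Rightarrow> (nat \<Rightarrow> real) set" where
  "cube s c r = (\<Pi>\<^sub>E i\<in>{..<s}. {c - r .. c + r})"

definition JN :: "real \<Rightarrow> real \<Rightarrow> nat \<Rightarrow> nat \<Rightarrow> (nat \<Rightarrow> real) \<Rightarrow> real \<Rightarrow> real" where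
  "JN \<alpha> \<beta> N s t r =
     (real N / real s) powr (real s / 2)
     * exp (real N / real s * phiN \<alpha> \<beta> s (mvec \<alpha> \<beta> s)
            - sqrt (real N / real s) * inner_s s t (mvec \<alpha> \<beta> s))
     * (\<integral>x. indicator (cube s (mstar \<alpha> \<beta>) r) x
              * exp (- (real N / real s) * phiN \<alpha> \<beta> s x + sqrt (real N / real s) * inner_s s t x)
          \<partial>lebesgue_s s)"

definition rho_un :: "real \<Rightarrow> real \<Rightarrow> nat \<Rightarrow> nat \<Rightarrow> real \<Rightarrow> (nat \<Rightarrow> real) \<Rightarrow> real" where
  "rho_un \<alpha> \<beta> N s r x =
     indicator (cube s 0 (sqrt (real N / real s) * r)) x
     * exp (- (real N / real s) *
            (phiN \<alpha> \<beta> s (\<lambda>i. mvec \<alpha> \<beta> s i + sqrt (real s / real N) * x i)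
             - phiN \<alpha> \<beta> s (mvec \<alpha> \<beta> s)))"

definition convex_s :: "nat \<Rightarrow> (nat \<Rightarrow> real) set \<Rightarrow> bool" where
  "convex_s s C \<longleftrightarrow> C \<subseteq> (\<Pi>\<^sub>E i\<in>{..<s}. UNIV) \<and>
     (\<forall>x\<in>C. \<forall>y\<in>C. \<forall>u::real. 0 \<le> u \<and> u \<le> 1 \<longrightarrow>
        (\<lambda>i. if i < s then u * x i + (1 - u) * y i else undefined) \<in> C)"

definition strongly_convex_on_s :: "nat \<Rightarrow> (nat \<Rightarrow> real) set \<Rightarrow> ((nat \<Rightarrow> real) \<Rightarrow> real) \<Rightarrow> bool" where
  "strongly_convex_on_s s C U \<longleftrightarrow> convex_s s C \<and>
     (\<exists>c>0. \<forall>x\<in>C. \<forall>y\<in>C. \<forall>u::real. 0 \<le> u \<and> u \<le> 1 \<longrightarrow>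
        (let V = (\<lambda>z. U z - c / 2 * (\<Sum>i<s. (z i)^2)) in
         V (\<lambda>i. if i < s then u * x i + (1 - u) * y i else undefined)
           \<le> u * V x + (1 - u) * V y))"

definition strongly_log_concave_density :: "nat \<Rightarrow> ((nat \<Rightarrow> real) \<Rightarrow> real) \<Rightarrow> bool" where
  "strongly_log_concave_density s f \<longleftrightarrow>
     f \<in> borel_measurable (lebesgue_s s) \<and>
     (\<forall>x\<in>space (lebesgue_s s). 0 \<le> f x) \<and>
     integrable (lebesgue_s s) f \<and> (\<integral>x. f x \<partial>lebesgue_s s) = 1 \<and>
     (\<exists>C U. strongly_convex_on_s s C U \<and>
        (\<forall>x\<in>space (lebesgue_s s). f x = (if x \<in> C then exp (- U x) else 0)))"

end

theory Submission
  imports Defs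
begin

text \<open>
  Substituting \<open>x = m\<^sup>* + \<surd>(s/N) y\<close> in the integral defining \<open>J\<^sub>N\<close> turns it into
  \<open>\<integral> exp(t\<^sup>T y) \<rho>\<^sub>N(y) dy\<close> for the unnormalised density \<open>\<rho>\<^sub>N\<close>: the prefactor \<open>(N/s)\<^bsup>s/2\<^esup>\<close> is exactly
  the Jacobian, and \<open>J\<^sub>N(0, r)\<close> is the normalising constant. The potential of \<open>\<rho>\<^sub>N\<close> is an affine
  rescaling of \<open>\<phi>\<^sub>N\<close>, so strong log-concavity reduces to strong convexity of \<open>\<phi>\<^sub>N\<close> on a small cube
  around \<open>m\<^sup>*\<close>. The Hessian of \<open>\<phi>\<^sub>N\<close> at \<open>y\<close> is \<open>A - A W A\<close> with \<open>W = diag(1 - tanh\<^sup>2 (y\<^sup>T A e\<^sub>k))\<close>;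
  for the circulant \<open>A\<close>, whose spectrum lies in \<open>[\<beta> - 2\<alpha>, \<beta> + 2\<alpha>] \<subseteq> (0, \<infinity>)\<close>, it is bounded below
  by \<open>min \<lambda>(1 - w \<lambda>)\<close> over \<open>\<lambda> = \<beta> \<plusminus> 2\<alpha>\<close> whenever \<open>0 \<le> W \<le> w\<close>, which is positive once
  \<open>w (\<beta> + 2\<alpha>) < 1\<close>. At \<open>m\<^sup>*\<close> the weights equal \<open>1 - m\<^sup>*\<^sup>2\<close>, and \<open>(1 - m\<^sup>*\<^sup>2)(\<beta> + 2\<alpha>) = 2u / sinh 2u < 1\<close>
  for \<open>u = (\<beta> + 2\<alpha>) m\<^sup>*\<close>; by continuity the bound persists on a cube around \<open>m\<^sup>*\<close>.
\<close>

section \<open>Lebesgue measure on \<open>\<real>\<^sup>s\<close>\<close>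

lemma emeasure_lborel_affine_vimage:
  fixes c m :: real
  assumes "c > 0" and B: "B \<in> sets borel"
  shows "ennreal c * emeasure lborel ((\<lambda>u. m + c * u) -` B) = emeasure lborel B"
proof -
  have "emeasure lborel B = emeasure (density (distr lborel borel (\<lambda>u. m + c * u)) (\<lambda>_. ennreal \<bar>c\<bar>)) B"
    using lborel_real_affine[of c m] assms by simp
  also have "\<dots> = ennreal c * emeasure (distr lborel borel (\<lambda>u. m + c * u)) B"
    using assms by (subst emeasure_density_const) auto
  also have "\<dots> = ennreal c * emeasure lborel ((\<lambda>u. m + c * u) -` B)"
    using B by (subst emeasure_distr) auto
  finally show ?thesis by simp
qed

lemma product_sigma_finite_lborel: "product_sigma_finite (\<lambda>_::nat. lborel :: real measure)"
  by (simp add: product_sigma_finite_def lborel.sigma_finite_measure_axioms)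

lemma lebesgue_s_affine:
  fixes c m :: real
  assumes c: "c > 0"
  shows "lebesgue_s s = density (distr (lebesgue_s s) (lebesgue_s s) (\<lambda>x. \<lambda>i\<in>{..<s}. m + c * x i))
                          (\<lambda>_. ennreal (c ^ s))"
  unfolding lebesgue_s_def
proof (rule sym, rule product_sigma_finite.PiM_eqI[OF product_sigma_finite_lborel])
  let ?L = "\<Pi>\<^sub>M i\<in>{..<s}. (lborel :: real measure)"
  let ?T = "\<lambda>x. \<lambda>i\<in>{..<s}. m + c * x i"
  let ?f = "\<lambda>u. m + c * u"
  show "finite {..<s}" by simp
  show "sets (density (distr ?L ?L ?T) (\<lambda>_. ennreal (c ^ s))) = sets ?L" by simp
  fix A :: "nat \<Rightarrow> real set"
  assume A: "\<And>i. i \<in> {..<s} \<Longrightarrow> A i \<in> sets lborel"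
  have T: "?T \<in> measurable ?L ?L" by measurable
  have vimage: "?T -` Pi\<^sub>E {..<s} A \<inter> space ?L = Pi\<^sub>E {..<s} (\<lambda>i. ?f -` A i)"
    by (auto simp: space_PiM PiE_def Pi_def extensional_def)
  have f: "?f \<in> borel_measurable borel" by measurable
  have "emeasure (density (distr ?L ?L ?T) (\<lambda>_. ennreal (c ^ s))) (Pi\<^sub>E {..<s} A)
      = ennreal (c ^ s) * emeasure (distr ?L ?L ?T) (Pi\<^sub>E {..<s} A)"
    using A by (subst emeasure_density_const) auto
  also have "\<dots> = ennreal (c ^ s) * emeasure ?L (Pi\<^sub>E {..<s} (\<lambda>i. ?f -` A i))"
    using A T by (subst emeasure_distr) (auto simp: vimage)
  also have "\<dots> = (\<Prod>i<s. ennreal c * emeasure lborel (?f -` A i))"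
    using A measurable_sets[OF f] c
    by (subst product_sigma_finite.emeasure_PiM[OF product_sigma_finite_lborel])
       (auto simp: prod.distrib ennreal_power)
  also have "\<dots> = (\<Prod>i<s. emeasure lborel (A i))"
    using A c by (intro prod.cong refl emeasure_lborel_affine_vimage) auto
  finally show "emeasure (density (distr ?L ?L ?T) (\<lambda>_. ennreal (c ^ s))) (Pi\<^sub>E {..<s} A)
      = (\<Prod>i\<in>{..<s}. emeasure lborel (A i))" by simp
qed

lemma integral_lebesgue_s_affine:
  fixes c m :: real
  assumes c: "c > 0" and g[measurable]: "g \<in> borel_measurable (lebesgue_s s)"
  shows "(\<integral>y. g y \<partial>lebesgue_s s) = c ^ s * (\<integral>x. g (\<lambda>i\<in>{..<s}. m + c * x i) \<partial>lebesgue_s s)"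
proof -
  let ?T = "\<lambda>x. \<lambda>i\<in>{..<s}. m + c * x i"
  have [measurable]: "?T \<in> measurable (lebesgue_s s) (lebesgue_s s)"
    unfolding lebesgue_s_def by measurable
  have "(\<integral>y. g y \<partial>lebesgue_s s) = (\<integral>y. g y \<partial>density (distr (lebesgue_s s) (lebesgue_s s) ?T) (\<lambda>_. ennreal (c ^ s)))"
    using lebesgue_s_affine[OF c, of s m] by simp
  also have "\<dots> = (\<integral>y. c ^ s * g y \<partial>distr (lebesgue_s s) (lebesgue_s s) ?T)"
    using c by (subst integral_density) auto
  also have "\<dots> = (\<integral>x. c ^ s * g (?T x) \<partial>lebesgue_s s)"
    by (subst integral_distr) auto
  finally show ?thesis by simp
qed

lemma space_lebesgue_s: "space (lebesgue_s s) = (\<Pi>\<^sub>E i\<in>{..<s}. UNIV)"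
  by (simp add: lebesgue_s_def space_PiM)

lemma component_measurable_lebesgue_s [measurable]: "(\<lambda>x. x i) \<in> borel_measurable (lebesgue_s s)"
proof (cases "i < s")
  case True
  then show ?thesis
    unfolding lebesgue_s_def using measurable_component_singleton[of i "{..<s}" "\<lambda>_. lborel"] by simp
next
  case False
  then have "x i = undefined" if "x \<in> space (lebesgue_s s)" for x
    using that by (auto simp: space_lebesgue_s PiE_def extensional_def)
  then show ?thesis by (subst measurable_cong[where g = "\<lambda>_. undefined"]) auto
qed

lemma phiN_measurable [measurable]:
  assumes [measurable]: "\<And>i. (\<lambda>x. f x i) \<in> borel_measurable M"
  shows "(\<lambda>x. phiN \<alpha> \<beta> s (f x)) \<in> borel_measurable M"
proof -
  have [measurable]: "(cosh :: real \<Rightarrow> real) \<in> borel_measurable borel"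
    by (intro borel_measurable_continuous_onI continuous_intros)
  show ?thesis unfolding phiN_def xAe_def by measurable
qed

lemma inner_s_measurable [measurable]:
  assumes [measurable]: "\<And>i. (\<lambda>x. f x i) \<in> borel_measurable M"
  shows "(\<lambda>x. inner_s s t (f x)) \<in> borel_measurable M"
  unfolding inner_s_def by measurable

lemma cube_in_sets_lebesgue_s [measurable]: "cube s c r \<in> sets (lebesgue_s s)"
  unfolding cube_def lebesgue_s_def by (rule sets_PiM_I_finite) auto

lemma emeasure_cube: "0 \<le> r \<Longrightarrow> emeasure (lebesgue_s s) (cube s c r) = ennreal ((2 * r) ^ s)"
  unfolding cube_def lebesgue_s_def
  by (subst product_sigma_finite.emeasure_PiM[OF product_sigma_finite_lborel])
     (auto simp: ennreal_power prod_constant)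

lemma mem_cube_iff: "x \<in> cube s c r \<longleftrightarrow> x \<in> (\<Pi>\<^sub>E i\<in>{..<s}. UNIV) \<and> (\<forall>i<s. \<bar>x i - c\<bar> \<le> r)"
  by (auto simp: cube_def PiE_def Pi_def abs_le_iff)

lemma mem_cube_rescale:
  assumes "0 < \<sigma>" "x \<in> space (lebesgue_s s)"
  shows "(\<lambda>i\<in>{..<s}. m + \<sigma> * x i) \<in> cube s m (\<sigma> * R) \<longleftrightarrow> x \<in> cube s 0 R"
  using assms by (simp add: mem_cube_iff space_lebesgue_s abs_mult)

lemma integrable_bounded_on_cube:
  fixes f :: "(nat \<Rightarrow> real) \<Rightarrow> real"
  assumes "f \<in> borel_measurable (lebesgue_s s)" and "0 \<le> r"
    and "\<And>x. x \<notin> cube s c r \<Longrightarrow> f x = 0" and "\<And>x. x \<in> cube s c r \<Longrightarrow> \<bar>f x\<bar> \<le> B"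
  shows "integrable (lebesgue_s s) f"
  using assms emeasure_cube[of r s c]
  by (intro integrableI_bounded_set[where A = "cube s c r" and B = B]) auto

section \<open>Strong convexity\<close>

lemma abs_convex_comb_le:
  fixes a b u R :: real
  assumes "\<bar>a\<bar> \<le> R" "\<bar>b\<bar> \<le> R" "0 \<le> u" "u \<le> 1"
  shows "\<bar>u * a + (1 - u) * b\<bar> \<le> R"
proof -
  have "\<bar>u * a + (1 - u) * b\<bar> \<le> u * \<bar>a\<bar> + (1 - u) * \<bar>b\<bar>"
    using assms abs_triangle_ineq[of "u * a" "(1 - u) * b"] by (simp add: abs_mult)
  also have "\<dots> \<le> u * R + (1 - u) * R"
    using assms by (intro add_mono mult_left_mono) auto
  finally show ?thesis by (simp add: algebra_simps)
qed

lemma convex_s_cube: "convex_s s (cube s c r)"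
  unfolding convex_s_def
proof (intro conjI ballI allI impI)
  show "cube s c r \<subseteq> (\<Pi>\<^sub>E i\<in>{..<s}. UNIV)" by (auto simp: mem_cube_iff)
  fix x y and u :: real
  assume "x \<in> cube s c r" "y \<in> cube s c r" "0 \<le> u \<and> u \<le> 1"
  then have "\<bar>u * (x i - c) + (1 - u) * (y i - c)\<bar> \<le> r" if "i < s" for i
    using that by (intro abs_convex_comb_le) (auto simp: mem_cube_iff)
  then show "(\<lambda>i. if i < s then u * x i + (1 - u) * y i else undefined) \<in> cube s c r"
    by (auto simp: mem_cube_iff PiE_def extensional_def algebra_simps split: if_splits)
qed

lemma sum_sq_convex_comb:
  fixes x y :: "nat \<Rightarrow> real"
  shows "(\<Sum>i<s. (u * x i + (1 - u) * y i)^2)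
       = u * (\<Sum>i<s. (x i)^2) + (1 - u) * (\<Sum>i<s. (y i)^2) - u * (1 - u) * (\<Sum>i<s. (x i - y i)^2)"
proof -
  have "(u * x i + (1 - u) * y i)^2 = u * (x i)^2 + (1 - u) * (y i)^2 - u * (1 - u) * (x i - y i)^2" for i
    by (simp add: power2_eq_square algebra_simps)
  then show ?thesis by (simp add: sum.distrib sum_subtractf sum_distrib_left)
qed

lemma strongly_convex_on_s_iff:
  "strongly_convex_on_s s C U \<longleftrightarrow> convex_s s C \<and>
     (\<exists>c>0. \<forall>x\<in>C. \<forall>y\<in>C. \<forall>u::real. 0 \<le> u \<and> u \<le> 1 \<longrightarrow>
        U (\<lambda>i. if i < s then u * x i + (1 - u) * y i else undefined)
          \<le> u * U x + (1 - u) * U y - c / 2 * (u * (1 - u)) * (\<Sum>i<s. (x i - y i)^2))"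
proof -
  have iff: "Sz = u * Sx + (1 - u) * Sy - u * (1 - u) * D \<Longrightarrow>
      Uz - c / 2 * Sz \<le> u * (Ux - c / 2 * Sx) + (1 - u) * (Uy - c / 2 * Sy)
      \<longleftrightarrow> Uz \<le> u * Ux + (1 - u) * Uy - c / 2 * (u * (1 - u)) * D"
    for Sz Sx Sy D Uz Ux Uy c u :: real
  proof -
    assume Sz: "Sz = u * Sx + (1 - u) * Sy - u * (1 - u) * D"
    have "u * (Ux - c / 2 * Sx) + (1 - u) * (Uy - c / 2 * Sy) - (Uz - c / 2 * Sz)
        = u * Ux + (1 - u) * Uy - c / 2 * (u * (1 - u)) * D - Uz"
      unfolding Sz by (simp add: field_simps)
    then show ?thesis by linarith
  qed
  have sq: "(\<Sum>i<s. (if i < s then u * x i + (1 - u) * y i else undefined)^2)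
      = u * (\<Sum>i<s. (x i)^2) + (1 - u) * (\<Sum>i<s. (y i)^2) - u * (1 - u) * (\<Sum>i<s. (x i - y i)^2)"
    for u and x y :: "nat \<Rightarrow> real"
    by (simp add: sum_sq_convex_comb)
  show ?thesis
    unfolding strongly_convex_on_s_def Let_def iff[OF sq] ..
qed

lemma strongly_convex_on_s_affine:
  assumes "strongly_convex_on_s s (cube s m r) U" and a: "0 < a" and \<sigma>: "0 < \<sigma>" and R: "\<sigma> * R \<le> r"
  shows "strongly_convex_on_s s (cube s 0 R) (\<lambda>x. a * U (\<lambda>i\<in>{..<s}. m + \<sigma> * x i) + b)"
proof -
  let ?T = "\<lambda>x. \<lambda>i\<in>{..<s}. m + \<sigma> * x i"
  obtain c where c: "c > 0" and U: "\<And>x y u. x \<in> cube s m r \<Longrightarrow> y \<in> cube s m r \<Longrightarrow> 0 \<le> u \<Longrightarrow> u \<le> 1 \<Longrightarrow>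
      U (\<lambda>i. if i < s then u * x i + (1 - u) * y i else undefined)
        \<le> u * U x + (1 - u) * U y - c / 2 * (u * (1 - u)) * (\<Sum>i<s. (x i - y i)^2)"
    using assms(1) unfolding strongly_convex_on_s_iff by blast
  have T: "?T x \<in> cube s m r" if "x \<in> cube s 0 R" for x
  proof -
    have "\<sigma> * \<bar>x i\<bar> \<le> r" if "i < s" for i
    proof -
      have "\<bar>x i\<bar> \<le> R" using \<open>x \<in> cube s 0 R\<close> that by (simp add: mem_cube_iff)
      then show ?thesis using \<sigma> R mult_left_mono[of "\<bar>x i\<bar>" R \<sigma>] by linarith
    qed
    then show ?thesis using \<sigma> by (simp add: mem_cube_iff abs_mult)
  qed
  have "a * U (?T (\<lambda>i. if i < s then u * x i + (1 - u) * y i else undefined)) + b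
      \<le> u * (a * U (?T x) + b) + (1 - u) * (a * U (?T y) + b)
        - a * \<sigma>^2 * c / 2 * (u * (1 - u)) * (\<Sum>i<s. (x i - y i)^2)"
    if "x \<in> cube s 0 R" "y \<in> cube s 0 R" "0 \<le> u" "u \<le> 1" for x y u
  proof -
    have comb: "?T (\<lambda>i. if i < s then u * x i + (1 - u) * y i else undefined)
        = (\<lambda>i. if i < s then u * ?T x i + (1 - u) * ?T y i else undefined)"
      by (auto simp: algebra_simps)
    have dist: "(\<Sum>i<s. (?T x i - ?T y i)^2) = \<sigma>^2 * (\<Sum>i<s. (x i - y i)^2)"
      by (simp add: sum_distrib_left power2_eq_square algebra_simps)
    show ?thesis
      using mult_left_mono[OF U[OF T T, of x y u] less_imp_le[OF a]] that
      unfolding comb dist by (simp add: algebra_simps)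
  qed
  then show ?thesis
    unfolding strongly_convex_on_s_iff using a \<sigma> c convex_s_cube
    by (intro conjI exI[of _ "a * \<sigma>^2 * c"]) auto
qed

section \<open>The magnetisation \<open>m\<^sup>*\<close>\<close>

lemma sinh_gt_self:
  fixes x :: real
  assumes "x > 0"
  shows "x < sinh x"
proof -
  have "\<exists>z>0. z < x \<and> (sinh x - x) - (sinh 0 - 0) = (x - 0) * (cosh z - 1)"
    using assms by (intro MVT2) (auto intro!: derivative_eq_intros)
  then obtain z where z: "0 < z" "sinh x - x = x * (cosh z - 1)" by auto
  have "cosh z > 1"
    using cosh_real_ge_1[of z] cosh_real_one_iff[of z] z(1) by linarith
  then show ?thesis using z(2) mult_pos_pos[OF assms, of "cosh z - 1"] by linarith
qed

lemma tanh_fixed_point_slope_lt_1: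
  fixes M m :: real
  assumes "M > 0" "m > 0" "m = tanh (M * m)"
  shows "(1 - m^2) * M < 1"
proof -
  define u where "u = M * m"
  define S where "S = sinh u"
  define C where "C = cosh u"
  have u: "u > 0" using assms by (simp add: u_def)
  have C: "C \<ge> 1" using cosh_real_ge_1 by (simp add: C_def)
  have S: "S > u" using sinh_gt_self[OF u] by (simp add: S_def)
  have m: "m = S / C" using assms(3) by (simp add: u_def[symmetric] tanh_def S_def C_def)
  have "1 - m^2 = (C^2 - S^2) / C^2" using C by (simp add: m power_divide field_simps)
  then have m2: "1 - m^2 = 1 / C^2" by (simp add: C_def S_def hyperbolic_pythagoras)
  have M: "M = u * C / S" using assms(1,2) C S u by (simp add: u_def m)
  have "(1 - m^2) * M = (1 / C^2) * (u * C / S)" by (simp only: m2 M)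
  also have "\<dots> = u / (C * S)" using C S u by (simp add: field_simps power2_eq_square)
  also have "\<dots> < 1"
  proof -
    have "S \<le> C * S" using mult_right_mono[OF C, of S] S u by simp
    then have "u < C * S" "0 < C * S" using S u by linarith+
    then show ?thesis by (simp add: divide_less_eq)
  qed
  finally show ?thesis .
qed

lemma mstar_fixed_point:
  fixes \<alpha> \<beta> :: real
  assumes "\<beta> + 2 * \<alpha> > 1"
  shows "0 < mstar \<alpha> \<beta>" and "mstar \<alpha> \<beta> = tanh ((\<beta> + 2 * \<alpha>) * mstar \<alpha> \<beta>)"
proof -
  define M where "M = \<beta> + 2 * \<alpha>"
  have M: "M > 1" using assms by (simp add: M_def)
  define f where "f x = tanh (M * x) - x" for x
  have "DERIV f 0 :> M - 1" unfolding f_def by (auto intro!: derivative_eq_intros)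
  then obtain d where d: "d > 0" "\<And>h. h > 0 \<Longrightarrow> h < d \<Longrightarrow> f 0 < f (0 + h)"
    using DERIV_pos_inc_right M by force
  define h where "h = min (d/2) (1/2)"
  have h: "h > 0" "h < d" "h \<le> 1" using d by (auto simp: h_def)
  have "f h > 0" using d(2)[OF h(1,2)] by (simp add: f_def)
  moreover have "f 1 < 0" using tanh_real_lt_1[of M] by (simp add: f_def)
  moreover have "continuous_on {h..1} f" unfolding f_def by (intro continuous_intros) auto
  ultimately obtain x0 where x0: "h \<le> x0" "f x0 = 0"
    using IVT2'[of f 1 0 h] h by auto
  define S where "S = {x. x = tanh (M * x)}"
  have x0S: "x0 \<in> S" using x0 by (simp add: S_def f_def)
  have "x < 1" if "x \<in> S" for x using that tanh_real_lt_1[of "M * x"] by (simp add: S_def)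
  then have bdd: "bdd_above S" by (intro bdd_aboveI[of _ 1]) (auto intro: less_imp_le)
  have "closed S" unfolding S_def by (intro closed_Collect_eq continuous_intros) auto
  then have "Sup S \<in> S" using closed_contains_Sup[OF _ bdd] x0S by auto
  then have fixed: "Sup S = tanh (M * Sup S)" unfolding S_def by (rule CollectD)
  have mstar: "mstar \<alpha> \<beta> = Sup S"
    unfolding mstar_def M_def[symmetric]
  proof (rule Greatest_equality)
    show "y \<le> Sup S" if "y = tanh (M * y)" for y
      using that bdd by (intro cSup_upper) (simp_all add: S_def)
  qed (fact fixed)
  have "x0 \<le> Sup S" using x0S bdd by (intro cSup_upper)
  then show "0 < mstar \<alpha> \<beta>" using x0 h mstar by linarith
  show "mstar \<alpha> \<beta> = tanh ((\<beta> + 2 * \<alpha>) * mstar \<alpha> \<beta>)"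
    unfolding mstar M_def[symmetric] by (fact fixed)
qed

section \<open>The circulant matrix \<open>A\<close>\<close>

definition cyc_succ :: "nat \<Rightarrow> nat \<Rightarrow> nat" where
  "cyc_succ s i = (i + 1) mod s"

definition cyc_pred :: "nat \<Rightarrow> nat \<Rightarrow> nat" where
  "cyc_pred s k = (k + s - 1) mod s"

lemma cyc_succ_lt: "0 < s \<Longrightarrow> cyc_succ s i < s"
  by (simp add: cyc_succ_def)

lemma cyc_pred_lt: "0 < s \<Longrightarrow> cyc_pred s k < s"
  by (simp add: cyc_pred_def)

lemma cyc_pred_succ: "i < s \<Longrightarrow> cyc_pred s (cyc_succ s i) = i"
  by (cases "i + 1 = s") (auto simp: cyc_pred_def cyc_succ_def)

lemma cyc_succ_pred: "k < s \<Longrightarrow> cyc_succ s (cyc_pred s k) = k"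
  by (cases k) (auto simp: cyc_pred_def cyc_succ_def)

lemma cyc_succ_eq_iff: "i < s \<Longrightarrow> k < s \<Longrightarrow> i = cyc_succ s k \<longleftrightarrow> k = cyc_pred s i"
  using cyc_pred_succ cyc_succ_pred by metis

lemma sum_cyc_succ_reindex: "0 < s \<Longrightarrow> (\<Sum>i<s. f (cyc_succ s i)) = (\<Sum>i<s. f i)"
  by (intro sum.reindex_bij_betw bij_betw_byWitness[where f' = "cyc_pred s"])
     (auto simp: cyc_pred_succ cyc_succ_pred cyc_succ_lt cyc_pred_lt)

lemma sum_cyc_pred_reindex: "0 < s \<Longrightarrow> (\<Sum>i<s. f (cyc_pred s i)) = (\<Sum>i<s. f i)"
  by (intro sum.reindex_bij_betw bij_betw_byWitness[where f' = "cyc_succ s"])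
     (auto simp: cyc_pred_succ cyc_succ_pred cyc_succ_lt cyc_pred_lt)

lemma sum_mult_cyc_pred:
  fixes d :: "nat \<Rightarrow> real"
  assumes "0 < s"
  shows "(\<Sum>i<s. d i * d (cyc_pred s i)) = (\<Sum>i<s. d i * d (cyc_succ s i))"
proof -
  have "(\<Sum>i<s. d i * d (cyc_pred s i)) = (\<Sum>i<s. d (cyc_succ s i) * d i)"
    using sum_cyc_succ_reindex[OF assms, of "\<lambda>i. d i * d (cyc_pred s i)"] by (simp add: cyc_pred_succ)
  then show ?thesis by (simp add: mult.commute)
qed

lemma abs_sum_mult_cyc_succ_le:
  fixes d :: "nat \<Rightarrow> real"
  assumes "0 < s"
  shows "\<bar>\<Sum>i<s. d i * d (cyc_succ s i)\<bar> \<le> (\<Sum>i<s. (d i)^2)"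
proof -
  have "\<bar>\<Sum>i<s. d i * d (cyc_succ s i)\<bar> \<le> (\<Sum>i<s. ((d i)^2 + (d (cyc_succ s i))^2) / 2)"
  proof (intro order.trans[OF sum_abs] sum_mono)
    fix i
    have "0 \<le> (\<bar>d i\<bar> - \<bar>d (cyc_succ s i)\<bar>)^2" by simp
    then show "\<bar>d i * d (cyc_succ s i)\<bar> \<le> ((d i)^2 + (d (cyc_succ s i))^2) / 2"
      by (simp add: power2_eq_square abs_mult algebra_simps)
  qed
  also have "\<dots> = (\<Sum>i<s. (d i)^2)"
    using sum_cyc_succ_reindex[OF assms, of "\<lambda>i. (d i)^2"]
    by (simp add: sum.distrib flip: sum_divide_distrib)
  finally show ?thesis .
qed

lemma Amat_cyc:
  "Amat \<alpha> \<beta> s i j = \<beta> * (if i = j then 1 else 0)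
     + \<alpha> * ((if j = cyc_succ s i then 1 else 0) + (if i = cyc_succ s j then 1 else 0))"
  by (simp add: Amat_def cyc_succ_def)

lemma Amat_sym: "Amat \<alpha> \<beta> s i j = Amat \<alpha> \<beta> s j i"
  by (simp add: Amat_def)

lemma Amat_nonneg: "0 \<le> \<alpha> \<Longrightarrow> 0 \<le> \<beta> \<Longrightarrow> 0 \<le> Amat \<alpha> \<beta> s i j"
  by (simp add: Amat_def)

lemma sum_Amat_mult:
  assumes "0 < s" "i < s"
  shows "(\<Sum>j<s. Amat \<alpha> \<beta> s i j * d j) = \<beta> * d i + \<alpha> * (d (cyc_succ s i) + d (cyc_pred s i))"
proof -
  have "(\<Sum>j<s. Amat \<alpha> \<beta> s i j * d j)
      = (\<Sum>j<s. \<beta> * (if j = i then d j else 0) + \<alpha> * (if j = cyc_succ s i then d j else 0)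
                 + \<alpha> * (if j = cyc_pred s i then d j else 0))"
    using assms by (intro sum.cong) (auto simp: Amat_cyc cyc_succ_eq_iff algebra_simps)
  then show ?thesis
    using assms cyc_succ_lt cyc_pred_lt
    by (simp add: sum.distrib distrib_left flip: sum_distrib_left)
qed

lemma xAe_cyc:
  "0 < s \<Longrightarrow> k < s \<Longrightarrow> xAe \<alpha> \<beta> s d k = \<beta> * d k + \<alpha> * (d (cyc_pred s k) + d (cyc_succ s k))"
  unfolding xAe_def using sum_Amat_mult[of s k \<alpha> \<beta> d]
  by (simp add: Amat_sym[of _ _ _ _ k] mult.commute)

lemma quad_form_Amat:
  fixes d :: "nat \<Rightarrow> real"
  assumes "0 < s"
  shows "(\<Sum>i<s. \<Sum>j<s. d i * Amat \<alpha> \<beta> s i j * d j)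
       = \<beta> * (\<Sum>i<s. (d i)^2) + 2 * \<alpha> * (\<Sum>i<s. d i * d (cyc_succ s i))"
proof -
  have "(\<Sum>i<s. \<Sum>j<s. d i * Amat \<alpha> \<beta> s i j * d j)
      = (\<Sum>i<s. d i * (\<beta> * d i + \<alpha> * (d (cyc_succ s i) + d (cyc_pred s i))))"
    using assms by (intro sum.cong) (simp_all add: mult.assoc sum_Amat_mult flip: sum_distrib_left)
  then show ?thesis
    using sum_mult_cyc_pred[OF assms, of d]
    by (simp add: algebra_simps power2_eq_square sum.distrib flip: sum_distrib_left)
qed

lemma quad_form_Amat_ge:
  fixes d :: "nat \<Rightarrow> real"
  assumes "0 < s" "0 \<le> \<alpha>"
  shows "(\<Sum>i<s. \<Sum>j<s. d i * Amat \<alpha> \<beta> s i j * d j) \<ge> (\<beta> - 2 * \<alpha>) * (\<Sum>i<s. (d i)^2)"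
proof -
  let ?e = "\<Sum>i<s. d i * d (cyc_succ s i)"
  have "\<alpha> * (- \<bar>?e\<bar>) \<le> \<alpha> * ?e" using assms(2) by (intro mult_left_mono) auto
  moreover have "\<alpha> * \<bar>?e\<bar> \<le> \<alpha> * (\<Sum>i<s. (d i)^2)"
    using assms by (intro mult_left_mono abs_sum_mult_cyc_succ_le) auto
  ultimately show ?thesis unfolding quad_form_Amat[OF assms(1)] by (simp add: algebra_simps)
qed

text \<open>The values of \<open>\<lambda> (1 - w0 \<lambda>)\<close> at the extreme eigenvalues \<open>\<lambda> = \<beta> \<plusminus> 2\<alpha>\<close> of \<open>A\<close>.\<close>

definition circ_hessian_bound :: "real \<Rightarrow> real \<Rightarrow> real \<Rightarrow> real" where
  "circ_hessian_bound \<alpha> \<beta> w0 =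
     min ((\<beta> + 2 * \<alpha>) * (1 - w0 * (\<beta> + 2 * \<alpha>))) ((\<beta> - 2 * \<alpha>) * (1 - w0 * (\<beta> - 2 * \<alpha>)))"

lemma circ_hessian_bound_pos:
  assumes "2 * \<alpha> < \<beta>" "0 < \<alpha>" "0 \<le> w0" "w0 * (\<beta> + 2 * \<alpha>) < 1"
  shows "0 < circ_hessian_bound \<alpha> \<beta> w0"
proof -
  have "w0 * (\<beta> - 2 * \<alpha>) \<le> w0 * (\<beta> + 2 * \<alpha>)" using assms by (intro mult_left_mono) auto
  then show ?thesis
    unfolding circ_hessian_bound_def using assms by (auto intro!: mult_pos_pos)
qed

lemma min_add_diff_mult_le:
  fixes X Y e n :: real
  assumes "\<bar>e\<bar> \<le> n"
  shows "min (X + Y) (X - Y) * n \<le> X * n + Y * e"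
proof (cases "Y \<ge> 0")
  case True
  have "Y * (- n) \<le> Y * e" using assms True by (intro mult_left_mono) auto
  moreover have "min (X + Y) (X - Y) * n \<le> (X - Y) * n" using assms by (intro mult_right_mono) auto
  ultimately show ?thesis by (simp add: algebra_simps)
next
  case False
  have "Y * n \<le> Y * e" using assms False by (intro mult_left_mono_neg) auto
  moreover have "min (X + Y) (X - Y) * n \<le> (X + Y) * n" using assms by (intro mult_right_mono) auto
  ultimately show ?thesis by (simp add: algebra_simps)
qed

lemma sum_xAe_sq_le:
  fixes d :: "nat \<Rightarrow> real"
  assumes "0 < s"
  shows "(\<Sum>k<s. (xAe \<alpha> \<beta> s d k)^2)
       \<le> (\<beta>^2 + 4 * \<alpha>^2) * (\<Sum>i<s. (d i)^2) + 4 * \<alpha> * \<beta> * (\<Sum>i<s. d i * d (cyc_succ s i))"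
proof -
  let ?p = "\<lambda>k. d (cyc_pred s k)" and ?q = "\<lambda>k. d (cyc_succ s k)"
  have "(\<Sum>k<s. (xAe \<alpha> \<beta> s d k)^2)
      \<le> (\<Sum>k<s. \<beta>^2 * (d k)^2 + 2 * \<alpha> * \<beta> * (d k * ?p k) + 2 * \<alpha> * \<beta> * (d k * ?q k)
                 + 2 * \<alpha>^2 * (?p k)^2 + 2 * \<alpha>^2 * (?q k)^2)"
  proof (intro sum_mono)
    fix k assume "k \<in> {..<s}"
    moreover have "0 \<le> \<alpha>^2 * (?p k - ?q k)^2" by simp
    ultimately show "(xAe \<alpha> \<beta> s d k)^2 \<le> \<beta>^2 * (d k)^2 + 2 * \<alpha> * \<beta> * (d k * ?p k)
        + 2 * \<alpha> * \<beta> * (d k * ?q k) + 2 * \<alpha>^2 * (?p k)^2 + 2 * \<alpha>^2 * (?q k)^2"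
      using assms by (simp add: xAe_cyc power2_eq_square algebra_simps)
  qed
  also have "\<dots> = \<beta>^2 * (\<Sum>k<s. (d k)^2) + 2 * \<alpha> * \<beta> * (\<Sum>k<s. d k * ?p k)
      + 2 * \<alpha> * \<beta> * (\<Sum>k<s. d k * ?q k) + 2 * \<alpha>^2 * (\<Sum>k<s. (?p k)^2) + 2 * \<alpha>^2 * (\<Sum>k<s. (?q k)^2)"
    by (simp only: sum.distrib sum_distrib_left)
  also have "\<dots> = (\<beta>^2 + 4 * \<alpha>^2) * (\<Sum>i<s. (d i)^2) + 4 * \<alpha> * \<beta> * (\<Sum>i<s. d i * d (cyc_succ s i))"
    unfolding sum_cyc_succ_reindex[OF assms, of "\<lambda>i. (d i)^2"] sum_cyc_pred_reindex[OF assms, of "\<lambda>i. (d i)^2"]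
      sum_mult_cyc_pred[OF assms, of d]
    by (simp add: algebra_simps)
  finally show ?thesis .
qed

text \<open>In matrix form \<open>A - A diag(w) A \<ge> circ_hessian_bound \<alpha> \<beta> w0 \<cdot> I\<close>; for
  \<open>w k = 1 - tanh\<^sup>2 (y\<^sup>T A e\<^sub>k)\<close> the left-hand side is the Hessian of \<open>\<phi>\<^sub>N\<close> at \<open>y\<close>.\<close>

lemma quad_form_minus_weighted_ge:
  fixes d w :: "nat \<Rightarrow> real"
  assumes s: "0 < s" and w0: "0 \<le> w0" and w: "\<And>k. k < s \<Longrightarrow> 0 \<le> w k \<and> w k \<le> w0"
  shows "circ_hessian_bound \<alpha> \<beta> w0 * (\<Sum>i<s. (d i)^2)
       \<le> (\<Sum>i<s. \<Sum>j<s. d i * Amat \<alpha> \<beta> s i j * d j) - (\<Sum>k<s. w k * (xAe \<alpha> \<beta> s d k)^2)"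
proof -
  define n where "n = (\<Sum>i<s. (d i)^2)"
  define e where "e = (\<Sum>i<s. d i * d (cyc_succ s i))"
  have "(\<Sum>k<s. w k * (xAe \<alpha> \<beta> s d k)^2) \<le> w0 * (\<Sum>k<s. (xAe \<alpha> \<beta> s d k)^2)"
    unfolding sum_distrib_left using w by (intro sum_mono mult_right_mono) auto
  also have "\<dots> \<le> w0 * ((\<beta>^2 + 4 * \<alpha>^2) * n + 4 * \<alpha> * \<beta> * e)"
    unfolding n_def e_def using w0 by (intro mult_left_mono sum_xAe_sq_le s)
  finally have "(\<beta> - w0 * (\<beta>^2 + 4 * \<alpha>^2)) * n + (2 * \<alpha> * (1 - 2 * w0 * \<beta>)) * e
      \<le> (\<Sum>i<s. \<Sum>j<s. d i * Amat \<alpha> \<beta> s i j * d j) - (\<Sum>k<s. w k * (xAe \<alpha> \<beta> s d k)^2)"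
    unfolding quad_form_Amat[OF s] n_def[symmetric] e_def[symmetric] by (simp add: algebra_simps)
  moreover have "circ_hessian_bound \<alpha> \<beta> w0 * n
      \<le> (\<beta> - w0 * (\<beta>^2 + 4 * \<alpha>^2)) * n + (2 * \<alpha> * (1 - 2 * w0 * \<beta>)) * e"
  proof -
    have "circ_hessian_bound \<alpha> \<beta> w0 = min ((\<beta> - w0 * (\<beta>^2 + 4 * \<alpha>^2)) + 2 * \<alpha> * (1 - 2 * w0 * \<beta>))
        ((\<beta> - w0 * (\<beta>^2 + 4 * \<alpha>^2)) - 2 * \<alpha> * (1 - 2 * w0 * \<beta>))"
      unfolding circ_hessian_bound_def by (simp add: algebra_simps power2_eq_square)
    moreover have "\<bar>e\<bar> \<le> n" unfolding e_def n_def by (rule abs_sum_mult_cyc_succ_le[OF s])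
    ultimately show ?thesis by (simp add: min_add_diff_mult_le)
  qed
  ultimately show ?thesis unfolding n_def by linarith
qed

section \<open>Strong convexity of \<open>\<phi>\<^sub>N\<close> near \<open>m\<^sup>*\<close>\<close>

lemma phiN_cong: "(\<And>i. i < s \<Longrightarrow> x i = y i) \<Longrightarrow> phiN \<alpha> \<beta> s x = phiN \<alpha> \<beta> s y"
  unfolding phiN_def xAe_def by (intro arg_cong2[where f = "(-)"] arg_cong[where f = "\<lambda>a. 1/2 * a"] sum.cong refl) auto

lemma xAe_const: "0 < s \<Longrightarrow> k < s \<Longrightarrow> xAe \<alpha> \<beta> s (\<lambda>_. c) k = c * (\<beta> + 2 * \<alpha>)"
  by (simp add: xAe_cyc algebra_simps)

lemma xAe_ge:
  assumes "0 < s" "k < s" "0 \<le> \<alpha>" "0 \<le> \<beta>" "\<And>i. i < s \<Longrightarrow> c \<le> y i"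
  shows "c * (\<beta> + 2 * \<alpha>) \<le> xAe \<alpha> \<beta> s y k"
proof -
  have "xAe \<alpha> \<beta> s (\<lambda>_. c) k \<le> xAe \<alpha> \<beta> s y k"
    unfolding xAe_def using assms Amat_nonneg by (intro sum_mono mult_right_mono) auto
  then show ?thesis using xAe_const[OF assms(1,2)] by simp
qed

lemma abs_xAe_le:
  assumes "0 < s" "k < s" "0 \<le> \<alpha>" "0 \<le> \<beta>" "\<And>i. i < s \<Longrightarrow> \<bar>y i\<bar> \<le> B"
  shows "\<bar>xAe \<alpha> \<beta> s y k\<bar> \<le> B * (\<beta> + 2 * \<alpha>)"
proof -
  have "\<bar>xAe \<alpha> \<beta> s y k\<bar> \<le> xAe \<alpha> \<beta> s (\<lambda>_. B) k"
    unfolding xAe_def using assms Amat_nonneg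
    by (intro order.trans[OF sum_abs] sum_mono) (auto simp: abs_mult intro: mult_right_mono)
  then show ?thesis using xAe_const[OF assms(1,2)] by simp
qed

lemma ln_cosh_le_abs: "ln (cosh x) \<le> \<bar>x :: real\<bar>"
proof -
  have "exp x + exp (- x) \<le> exp \<bar>x\<bar> + exp \<bar>x\<bar>" by (intro add_mono) simp_all
  then have "cosh x \<le> exp \<bar>x\<bar>" by (simp add: cosh_def)
  then have "ln (cosh x) \<le> ln (exp \<bar>x\<bar>)" using cosh_real_pos[of x] by (subst ln_le_cancel_iff) auto
  then show ?thesis by simp
qed

lemma phiN_ge:
  assumes "0 < s" "2 * \<alpha> < \<beta>" "0 \<le> \<alpha>" "\<And>i. i < s \<Longrightarrow> \<bar>y i\<bar> \<le> B"
  shows "- (real s * (B * (\<beta> + 2 * \<alpha>))) \<le> phiN \<alpha> \<beta> s y"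
proof -
  have "(\<Sum>k<s. ln (cosh (xAe \<alpha> \<beta> s y k))) \<le> (\<Sum>k<s. B * (\<beta> + 2 * \<alpha>))"
    using assms order.trans[OF ln_cosh_le_abs abs_xAe_le] by (intro sum_mono) auto
  moreover have "0 \<le> (\<beta> - 2 * \<alpha>) * (\<Sum>i<s. (y i)^2)"
    using assms by (intro mult_nonneg_nonneg sum_nonneg) auto
  ultimately show ?thesis
    using quad_form_Amat_ge[OF assms(1,3), where d = y and \<beta> = \<beta>] unfolding phiN_def by simp
qed

lemma xAe_add_scaled: "xAe \<alpha> \<beta> s (\<lambda>i. y i + u * d i) k = xAe \<alpha> \<beta> s y k + u * xAe \<alpha> \<beta> s d k"
  by (simp add: xAe_def sum.distrib sum_distrib_left algebra_simps)

lemma phiN_add_scaled: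
  "phiN \<alpha> \<beta> s (\<lambda>i. y i + u * d i) =
     1/2 * ((\<Sum>i<s. \<Sum>j<s. y i * Amat \<alpha> \<beta> s i j * y j)
       + u * (\<Sum>i<s. \<Sum>j<s. d i * Amat \<alpha> \<beta> s i j * y j + y i * Amat \<alpha> \<beta> s i j * d j)
       + u^2 * (\<Sum>i<s. \<Sum>j<s. d i * Amat \<alpha> \<beta> s i j * d j))
     - (\<Sum>k<s. ln (cosh (xAe \<alpha> \<beta> s y k + u * xAe \<alpha> \<beta> s d k)))"
  unfolding phiN_def xAe_add_scaled
  by (simp add: sum.distrib sum_distrib_left algebra_simps power2_eq_square)

lemma convex_on_phiN_line:
  fixes y d :: "nat \<Rightarrow> real"
  assumes s: "0 < s" and w0: "0 \<le> w0"
    and sech: "\<And>u k. u \<in> {0..1} \<Longrightarrow> k < s \<Longrightarrow> 1 - tanh (xAe \<alpha> \<beta> s (\<lambda>i. y i + u * d i) k)^2 \<le> w0"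
  shows "convex_on {0..1} (\<lambda>u. phiN \<alpha> \<beta> s (\<lambda>i. y i + u * d i)
                                - circ_hessian_bound \<alpha> \<beta> w0 / 2 * (\<Sum>i<s. (d i)^2) * u^2)"
proof -
  define a where "a = (\<Sum>i<s. \<Sum>j<s. y i * Amat \<alpha> \<beta> s i j * y j)"
  define b where "b = (\<Sum>i<s. \<Sum>j<s. d i * Amat \<alpha> \<beta> s i j * y j + y i * Amat \<alpha> \<beta> s i j * d j)"
  define c where "c = (\<Sum>i<s. \<Sum>j<s. d i * Amat \<alpha> \<beta> s i j * d j)"
  define x where "x k = xAe \<alpha> \<beta> s y k" for k
  define v where "v k = xAe \<alpha> \<beta> s d k" for k
  define C where "C = circ_hessian_bound \<alpha> \<beta> w0 * (\<Sum>i<s. (d i)^2)"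
  define G1 where "G1 u = 1/2 * (b + 2 * u * c) - (\<Sum>k<s. tanh (x k + u * v k) * v k) - C * u" for u
  define G2 where "G2 u = c - (\<Sum>k<s. (1 - tanh (x k + u * v k)^2) * (v k)^2) - C" for u
  have G: "(\<lambda>u. phiN \<alpha> \<beta> s (\<lambda>i. y i + u * d i) - circ_hessian_bound \<alpha> \<beta> w0 / 2 * (\<Sum>i<s. (d i)^2) * u^2)
      = (\<lambda>u. 1/2 * (a + u * b + u^2 * c) - (\<Sum>k<s. ln (cosh (x k + u * v k))) - C / 2 * u^2)"
    unfolding phiN_add_scaled a_def b_def c_def x_def v_def C_def by simp
  have G2: "0 \<le> G2 u" if "u \<in> {0..1}" for u
  proof -
    have "C \<le> c - (\<Sum>k<s. (1 - tanh (x k + u * v k)^2) * (v k)^2)"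
      unfolding c_def v_def C_def x_def
    proof (rule quad_form_minus_weighted_ge[OF s w0])
      fix k assume "k < s"
      then show "0 \<le> 1 - tanh (xAe \<alpha> \<beta> s y k + u * xAe \<alpha> \<beta> s d k)^2
          \<and> 1 - tanh (xAe \<alpha> \<beta> s y k + u * xAe \<alpha> \<beta> s d k)^2 \<le> w0"
        using sech[OF that] tanh_real_bounds[of "xAe \<alpha> \<beta> s y k + u * xAe \<alpha> \<beta> s d k"]
        by (simp add: xAe_add_scaled abs_square_le_1 abs_le_iff)
    qed
    then show ?thesis unfolding G2_def by simp
  qed
  show ?thesis
    unfolding G
  proof (rule f''_ge0_imp_convex[where f' = G1 and f'' = G2])
    show "((\<lambda>u. 1/2 * (a + u * b + u^2 * c) - (\<Sum>k<s. ln (cosh (x k + u * v k))) - C / 2 * u^2)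
        has_real_derivative G1 u) (at u)" for u
      unfolding G1_def
      by (auto intro!: derivative_eq_intros simp: algebra_simps power2_eq_square tanh_def)
    show "(G1 has_real_derivative G2 u) (at u)" for u
      unfolding G1_def G2_def
      by (auto intro!: derivative_eq_intros simp: algebra_simps power2_eq_square)
  qed (use G2 in auto)
qed

lemma phiN_convex_comb_le:
  fixes x y :: "nat \<Rightarrow> real"
  assumes s: "0 < s" and w0: "0 \<le> w0"
    and sech: "\<And>v k. v \<in> {0..1} \<Longrightarrow> k < s \<Longrightarrow> 1 - tanh (xAe \<alpha> \<beta> s (\<lambda>i. y i + v * (x i - y i)) k)^2 \<le> w0"
    and u: "0 \<le> u" "u \<le> 1"
  shows "phiN \<alpha> \<beta> s (\<lambda>i. y i + u * (x i - y i))
      \<le> u * phiN \<alpha> \<beta> s x + (1 - u) * phiN \<alpha> \<beta> s y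
        - circ_hessian_bound \<alpha> \<beta> w0 / 2 * (u * (1 - u)) * (\<Sum>i<s. (x i - y i)^2)"
proof -
  let ?c = "circ_hessian_bound \<alpha> \<beta> w0"
  define D where "D = (\<Sum>i<s. (x i - y i)^2)"
  define F where "F v = phiN \<alpha> \<beta> s (\<lambda>i. y i + v * (x i - y i)) - ?c / 2 * D * v^2" for v
  have "convex_on {0..1} F"
    unfolding F_def D_def by (rule convex_on_phiN_line[OF s w0 sech])
  moreover have F01: "F 0 = phiN \<alpha> \<beta> s y" "F 1 = phiN \<alpha> \<beta> s x - ?c / 2 * D"
    by (simp_all add: F_def)
  ultimately have "F u \<le> (1 - u) * phiN \<alpha> \<beta> s y + u * (phiN \<alpha> \<beta> s x - ?c / 2 * D)"
    using convex_onD[of "{0..1}" F u 0 1] u unfolding F01[symmetric] by simp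
  moreover have "(1 - u) * phiN \<alpha> \<beta> s y + u * (phiN \<alpha> \<beta> s x - ?c / 2 * D) + ?c / 2 * D * u^2
      = u * phiN \<alpha> \<beta> s x + (1 - u) * phiN \<alpha> \<beta> s y - ?c / 2 * (u * (1 - u)) * D"
    by (simp add: field_simps power2_eq_square)
  ultimately show ?thesis unfolding F_def D_def[symmetric] by linarith
qed

lemma sech_sq_bound_near_mstar:
  assumes s: "0 < s" and ab: "2 * \<alpha> < \<beta>" "0 < \<alpha>" "1 < \<beta> + 2 * \<alpha>"
  shows "\<exists>r0>0. \<exists>w0\<ge>0. w0 * (\<beta> + 2 * \<alpha>) < 1 \<and>
    (\<forall>y k. (\<forall>i<s. \<bar>y i - mstar \<alpha> \<beta>\<bar> \<le> r0) \<longrightarrow> k < s \<longrightarrow> 1 - tanh (xAe \<alpha> \<beta> s y k)^2 \<le> w0)"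
proof -
  define m where "m = mstar \<alpha> \<beta>"
  define M where "M = \<beta> + 2 * \<alpha>"
  have m: "0 < m" "m = tanh (M * m)" using mstar_fixed_point[OF ab(3)] by (simp_all add: m_def M_def)
  have M: "1 < M" using ab by (simp add: M_def)
  define h where "h r = (1 - tanh (M * (m - r))^2) * M" for r
  have "h 0 < 1" using tanh_fixed_point_slope_lt_1[of M m] m M by (simp add: h_def)
  moreover have "isCont h 0" unfolding h_def by (intro continuous_intros) auto
  ultimately have "\<forall>\<^sub>F r in at 0. h r < 1"
    unfolding isCont_def by (intro order_tendstoD(2)) auto
  then obtain \<delta> where \<delta>: "\<delta> > 0" "\<And>r. r \<noteq> 0 \<Longrightarrow> dist r 0 < \<delta> \<Longrightarrow> h r < 1"
    unfolding eventually_at by auto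
  define r0 where "r0 = min (\<delta> / 2) (m / 2)"
  have r0: "0 < r0" "r0 < m" "h r0 < 1" using \<delta> m by (auto simp: r0_def)
  define w0 where "w0 = 1 - tanh (M * (m - r0))^2"
  have "0 \<le> w0"
    using tanh_real_bounds[of "M * (m - r0)"] by (simp add: w0_def abs_square_le_1 abs_le_iff)
  moreover have "w0 * M < 1" using r0(3) by (simp add: h_def w0_def)
  moreover have "1 - tanh (xAe \<alpha> \<beta> s y k)^2 \<le> w0"
    if y: "\<forall>i<s. \<bar>y i - m\<bar> \<le> r0" and k: "k < s" for y k
  proof -
    have "(m - r0) * M \<le> xAe \<alpha> \<beta> s y k"
      unfolding M_def using y ab by (intro xAe_ge[OF s k]) (auto simp: abs_le_iff)
    then have "tanh (M * (m - r0)) \<le> tanh (xAe \<alpha> \<beta> s y k)" by (simp add: mult.commute)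
    moreover have "0 \<le> tanh (M * (m - r0))" using M r0 by simp
    ultimately have "tanh (M * (m - r0))^2 \<le> tanh (xAe \<alpha> \<beta> s y k)^2" by (intro power_mono) auto
    then show ?thesis by (simp add: w0_def)
  qed
  ultimately show ?thesis
    unfolding m_def M_def using r0(1) by blast
qed

lemma phiN_strongly_convex_near_mstar:
  assumes s: "0 < s" and ab: "2 * \<alpha> < \<beta>" "0 < \<alpha>" "1 < \<beta> + 2 * \<alpha>"
  shows "\<exists>r0>0. strongly_convex_on_s s (cube s (mstar \<alpha> \<beta>) r0) (phiN \<alpha> \<beta> s)"
proof -
  obtain r0 w0 where r0: "0 < r0" and w0: "0 \<le> w0" "w0 * (\<beta> + 2 * \<alpha>) < 1"
    and sech: "\<And>y k. \<forall>i<s. \<bar>y i - mstar \<alpha> \<beta>\<bar> \<le> r0 \<Longrightarrow> k < s \<Longrightarrow> 1 - tanh (xAe \<alpha> \<beta> s y k)^2 \<le> w0"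
    using sech_sq_bound_near_mstar[OF assms] by blast
  let ?C = "cube s (mstar \<alpha> \<beta>) r0"
  have "phiN \<alpha> \<beta> s (\<lambda>i. if i < s then u * x i + (1 - u) * y i else undefined)
      \<le> u * phiN \<alpha> \<beta> s x + (1 - u) * phiN \<alpha> \<beta> s y
        - circ_hessian_bound \<alpha> \<beta> w0 / 2 * (u * (1 - u)) * (\<Sum>i<s. (x i - y i)^2)"
    if x: "x \<in> ?C" and y: "y \<in> ?C" and u: "0 \<le> u" "u \<le> 1" for x y u
  proof -
    have "1 - tanh (xAe \<alpha> \<beta> s (\<lambda>i. y i + v * (x i - y i)) k)^2 \<le> w0" if "v \<in> {0..1}" "k < s" for v k
    proof (rule sech[OF _ that(2)], intro allI impI)
      fix i assume "i < s"
      then have "\<bar>v * (x i - mstar \<alpha> \<beta>) + (1 - v) * (y i - mstar \<alpha> \<beta>)\<bar> \<le> r0"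
        using x y that(1) by (intro abs_convex_comb_le) (auto simp: mem_cube_iff)
      then show "\<bar>y i + v * (x i - y i) - mstar \<alpha> \<beta>\<bar> \<le> r0" by (simp add: algebra_simps)
    qed
    moreover have "phiN \<alpha> \<beta> s (\<lambda>i. if i < s then u * x i + (1 - u) * y i else undefined)
        = phiN \<alpha> \<beta> s (\<lambda>i. y i + u * (x i - y i))"
      by (rule phiN_cong) (simp add: algebra_simps)
    ultimately show ?thesis using phiN_convex_comb_le[OF s w0(1) _ u] by simp
  qed
  then have "strongly_convex_on_s s ?C (phiN \<alpha> \<beta> s)"
    unfolding strongly_convex_on_s_iff
    using convex_s_cube circ_hessian_bound_pos[OF ab(1,2) w0] by blast
  then show ?thesis using r0 by blast
qed

section \<open>The density \<open>\<rho>\<^sub>N\<close> and the integral \<open>J\<^sub>N\<close>\<close>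

lemma phiN_mvec: "phiN \<alpha> \<beta> s (mvec \<alpha> \<beta> s) = phiN \<alpha> \<beta> s (\<lambda>_. mstar \<alpha> \<beta>)"
  by (rule phiN_cong) (simp add: mvec_def)

lemma rho_un_rescaled:
  "rho_un \<alpha> \<beta> N s r x = indicator (cube s 0 (sqrt (real N / real s) * r)) x
     * exp (- (real N / real s) * (phiN \<alpha> \<beta> s (\<lambda>i\<in>{..<s}. mstar \<alpha> \<beta> + sqrt (real s / real N) * x i)
                                    - phiN \<alpha> \<beta> s (\<lambda>_. mstar \<alpha> \<beta>)))"
proof -
  have "phiN \<alpha> \<beta> s (\<lambda>i. mvec \<alpha> \<beta> s i + sqrt (real s / real N) * x i)
      = phiN \<alpha> \<beta> s (\<lambda>i\<in>{..<s}. mstar \<alpha> \<beta> + sqrt (real s / real N) * x i)"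
    by (rule phiN_cong) (simp add: mvec_def)
  then show ?thesis by (simp add: rho_un_def phiN_mvec)
qed

lemma rho_un_measurable [measurable]: "rho_un \<alpha> \<beta> N s r \<in> borel_measurable (lebesgue_s s)"
  unfolding rho_un_def by measurable

lemma rho_un_nonneg: "0 \<le> rho_un \<alpha> \<beta> N s r x"
  by (simp add: rho_un_def)

lemma rho_un_eq_0_iff: "rho_un \<alpha> \<beta> N s r x = 0 \<longleftrightarrow> x \<notin> cube s 0 (sqrt (real N / real s) * r)"
  unfolding rho_un_def indicator_def by simp

lemma integrable_exp_inner_rho_un:
  assumes s: "0 < s" and N: "0 < N" and ab: "2 * \<alpha> < \<beta>" "0 \<le> \<alpha>" and r: "0 \<le> r"
  shows "integrable (lebesgue_s s) (\<lambda>x. exp (inner_s s t x) * rho_un \<alpha> \<beta> N s r x)"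
proof -
  define \<sigma> where "\<sigma> = sqrt (real s / real N)"
  define R where "R = sqrt (real N / real s) * r"
  define m where "m = mstar \<alpha> \<beta>"
  have \<sigma>: "0 < \<sigma>" "\<sigma> * R = r"
    using s N by (simp_all add: \<sigma>_def R_def real_sqrt_mult[symmetric] flip: mult.assoc)
  define A where "A = real N / real s"
  define K where "K = A * (real s * ((\<bar>m\<bar> + r) * (\<beta> + 2 * \<alpha>)) + phiN \<alpha> \<beta> s (\<lambda>_. m))"
  have "\<bar>exp (inner_s s t x) * rho_un \<alpha> \<beta> N s r x\<bar> \<le> exp (\<Sum>i<s. \<bar>t i\<bar> * R) * exp K"
    if x: "x \<in> cube s 0 R" for x
  proof -
    have xi: "\<bar>x i\<bar> \<le> R" if "i < s" for i using x that by (simp add: mem_cube_iff)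
    have "t i * x i \<le> \<bar>t i\<bar> * R" if "i < s" for i
      using abs_ge_self[of "t i * x i"] mult_left_mono[OF xi[OF that], of "\<bar>t i\<bar>"]
      by (simp add: abs_mult)
    then have "inner_s s t x \<le> (\<Sum>i<s. \<bar>t i\<bar> * R)"
      unfolding inner_s_def by (intro sum_mono) auto
    moreover have "\<bar>m + \<sigma> * x i\<bar> \<le> \<bar>m\<bar> + r" if "i < s" for i
    proof -
      have "\<bar>\<sigma> * x i\<bar> \<le> \<sigma> * R"
        using mult_left_mono[OF xi[OF that], of \<sigma>] \<sigma>(1) by (simp add: abs_mult)
      then show ?thesis using \<sigma>(2) abs_triangle_ineq[of m "\<sigma> * x i"] by linarith
    qed
    then have "- (real s * ((\<bar>m\<bar> + r) * (\<beta> + 2 * \<alpha>))) \<le> phiN \<alpha> \<beta> s (\<lambda>i\<in>{..<s}. m + \<sigma> * x i)"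
      using s ab by (intro phiN_ge) auto
    then have "A * (- phiN \<alpha> \<beta> s (\<lambda>i\<in>{..<s}. m + \<sigma> * x i)) \<le> A * (real s * ((\<bar>m\<bar> + r) * (\<beta> + 2 * \<alpha>)))"
      using N s by (intro mult_left_mono) (auto simp: A_def)
    then have "rho_un \<alpha> \<beta> N s r x \<le> exp K"
      using x unfolding rho_un_rescaled K_def by (simp add: A_def m_def \<sigma>_def R_def algebra_simps)
    ultimately show ?thesis using rho_un_nonneg by (simp add: mult_mono)
  qed
  then show ?thesis
    using r by (intro integrable_bounded_on_cube[where c = 0 and r = R]) (auto simp: rho_un_def R_def)
qed

lemma integrable_rho_un:
  assumes "0 < s" "0 < N" "2 * \<alpha> < \<beta>" "0 \<le> \<alpha>" "0 \<le> r"
  shows "integrable (lebesgue_s s) (rho_un \<alpha> \<beta> N s r)"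
  using integrable_exp_inner_rho_un[OF assms, of "\<lambda>_. 0"] by (simp add: inner_s_def)

lemma integral_rho_un_pos:
  assumes "0 < s" "0 < N" "2 * \<alpha> < \<beta>" "0 \<le> \<alpha>" "0 < r"
  shows "0 < (\<integral>x. rho_un \<alpha> \<beta> N s r x \<partial>lebesgue_s s)"
proof -
  define R where "R = sqrt (real N / real s) * r"
  have R: "0 < R" using assms by (simp add: R_def)
  have int: "integrable (lebesgue_s s) (rho_un \<alpha> \<beta> N s r)"
    using assms by (intro integrable_rho_un) auto
  have "(\<integral>x. rho_un \<alpha> \<beta> N s r x \<partial>lebesgue_s s) \<noteq> 0"
  proof
    assume "(\<integral>x. rho_un \<alpha> \<beta> N s r x \<partial>lebesgue_s s) = 0"
    then have "AE x in lebesgue_s s. rho_un \<alpha> \<beta> N s r x = 0"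
      using integral_nonneg_eq_0_iff_AE[OF int] rho_un_nonneg by simp
    then have "AE x in lebesgue_s s. x \<notin> cube s 0 R"
      unfolding rho_un_eq_0_iff R_def .
    moreover have "{x \<in> space (lebesgue_s s). \<not> x \<notin> cube s 0 R} = cube s 0 R"
      using sets.sets_into_space[OF cube_in_sets_lebesgue_s] by auto
    ultimately have "emeasure (lebesgue_s s) (cube s 0 R) = 0"
      using AE_iff_measurable[OF cube_in_sets_lebesgue_s] by simp
    then show False using emeasure_cube[of R s 0] R by simp
  qed
  moreover have "0 \<le> (\<integral>x. rho_un \<alpha> \<beta> N s r x \<partial>lebesgue_s s)"
    using rho_un_nonneg by (rule integral_nonneg_AE[OF AE_I2])
  ultimately show ?thesis by simp
qed

lemma JN_integrand_rescaled:
  fixes \<alpha> \<beta> :: real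
  assumes s: "0 < s" and N: "0 < N" and x: "x \<in> space (lebesgue_s s)"
  shows "exp (real N / real s * phiN \<alpha> \<beta> s (mvec \<alpha> \<beta> s) - sqrt (real N / real s) * inner_s s t (mvec \<alpha> \<beta> s))
      * (indicator (cube s (mstar \<alpha> \<beta>) r) (\<lambda>i\<in>{..<s}. mstar \<alpha> \<beta> + sqrt (real s / real N) * x i)
         * exp (- (real N / real s) * phiN \<alpha> \<beta> s (\<lambda>i\<in>{..<s}. mstar \<alpha> \<beta> + sqrt (real s / real N) * x i)
                + sqrt (real N / real s) * inner_s s t (\<lambda>i\<in>{..<s}. mstar \<alpha> \<beta> + sqrt (real s / real N) * x i)))
    = exp (inner_s s t x) * rho_un \<alpha> \<beta> N s r x"
proof -
  define A where "A = real N / real s"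
  define \<sigma> where "\<sigma> = sqrt (real s / real N)"
  define \<tau> where "\<tau> = sqrt (real N / real s)"
  define T where "T = (\<lambda>i\<in>{..<s}. mstar \<alpha> \<beta> + \<sigma> * x i)"
  define P where "P = phiN \<alpha> \<beta> s T"
  define P0 where "P0 = phiN \<alpha> \<beta> s (mvec \<alpha> \<beta> s)"
  define I where "I = (indicator (cube s 0 (\<tau> * r)) x :: real)"
  define ip where "ip = inner_s s t (mvec \<alpha> \<beta> s)"
  have \<sigma>: "0 < \<sigma>" "\<sigma> * \<tau> = 1"
    using s N by (simp_all add: \<sigma>_def \<tau>_def real_sqrt_mult[symmetric])
  then have \<sigma>\<tau>r: "\<sigma> * (\<tau> * r) = r" by (metis mult.assoc mult_1)
  have ind: "indicator (cube s (mstar \<alpha> \<beta>) r) T = I"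
    using mem_cube_rescale[OF \<sigma>(1) x, of "mstar \<alpha> \<beta>" "\<tau> * r", unfolded \<sigma>\<tau>r]
    by (simp add: T_def I_def indicator_def)
  have inner: "inner_s s t T = ip + \<sigma> * inner_s s t x"
    unfolding inner_s_def T_def ip_def by (simp add: mvec_def sum.distrib sum_distrib_left algebra_simps)
  have rho: "rho_un \<alpha> \<beta> N s r x = I * exp (- A * (P - P0))"
    unfolding rho_un_rescaled phiN_mvec[symmetric] I_def A_def P_def P0_def T_def \<sigma>_def \<tau>_def ..
  have "\<tau> * (\<sigma> * inner_s s t x) = inner_s s t x" using \<sigma>(2) by (metis mult.assoc mult.commute mult_1)
  then have exponent: "A * P0 - \<tau> * ip + (- A * P + \<tau> * (ip + \<sigma> * inner_s s t x)) = inner_s s t x + - A * (P - P0)"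
    by (simp add: algebra_simps)
  have "exp (A * P0 - \<tau> * ip) * (indicator (cube s (mstar \<alpha> \<beta>) r) T * exp (- A * P + \<tau> * inner_s s t T))
      = I * exp (A * P0 - \<tau> * ip + (- A * P + \<tau> * (ip + \<sigma> * inner_s s t x)))"
    by (simp only: ind inner exp_add mult_ac)
  also have "\<dots> = exp (inner_s s t x) * rho_un \<alpha> \<beta> N s r x"
    unfolding exponent by (simp only: rho exp_add mult_ac)
  finally show ?thesis unfolding A_def P0_def \<tau>_def ip_def T_def P_def \<sigma>_def .
qed

lemma JN_eq_integral_exp_inner_rho_un:
  assumes s: "0 < s" and N: "0 < N"
  shows "JN \<alpha> \<beta> N s t r = (\<integral>x. exp (inner_s s t x) * rho_un \<alpha> \<beta> N s r x \<partial>lebesgue_s s)"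
proof -
  define A where "A = real N / real s"
  define \<sigma> where "\<sigma> = sqrt (real s / real N)"
  define E where "E = exp (A * phiN \<alpha> \<beta> s (mvec \<alpha> \<beta> s) - sqrt A * inner_s s t (mvec \<alpha> \<beta> s))"
  define g where "g y = indicator (cube s (mstar \<alpha> \<beta>) r) y * exp (- A * phiN \<alpha> \<beta> s y + sqrt A * inner_s s t y)" for y
  have \<sigma>: "0 < \<sigma>" using s N by (simp add: \<sigma>_def)
  have g: "g \<in> borel_measurable (lebesgue_s s)" unfolding g_def by measurable
  have A: "0 < A" using s N by (simp add: A_def)
  then have "sqrt A ^ s = A powr (real s / 2)"
    by (simp add: powr_half_sqrt[symmetric] powr_realpow[symmetric] powr_powr)
  moreover have "\<sigma> * sqrt A = 1"
    using s N by (simp add: \<sigma>_def A_def real_sqrt_mult[symmetric])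
  ultimately have jacobian: "A powr (real s / 2) * \<sigma> ^ s = 1"
    by (metis power_mult_distrib power_one mult.commute)
  have "JN \<alpha> \<beta> N s t r = A powr (real s / 2) * E * (\<integral>y. g y \<partial>lebesgue_s s)"
    unfolding JN_def E_def g_def A_def ..
  also have "\<dots> = A powr (real s / 2) * \<sigma> ^ s * (\<integral>x. E * g (\<lambda>i\<in>{..<s}. mstar \<alpha> \<beta> + \<sigma> * x i) \<partial>lebesgue_s s)"
    unfolding integral_lebesgue_s_affine[OF \<sigma> g, of "mstar \<alpha> \<beta>"] by simp
  also have "\<dots> = (\<integral>x. exp (inner_s s t x) * rho_un \<alpha> \<beta> N s r x \<partial>lebesgue_s s)"
    unfolding jacobian mult_1
  proof (rule Bochner_Integration.integral_cong[OF refl])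
    fix x assume "x \<in> space (lebesgue_s s)"
    then show "E * g (\<lambda>i\<in>{..<s}. mstar \<alpha> \<beta> + \<sigma> * x i) = exp (inner_s s t x) * rho_un \<alpha> \<beta> N s r x"
      unfolding E_def g_def \<sigma>_def A_def by (rule JN_integrand_rescaled[OF s N])
  qed
  finally show ?thesis .
qed

lemma strongly_log_concave_rho_un:
  assumes s: "0 < s" and N: "0 < N" and r: "r \<le> r0"
    and conv: "strongly_convex_on_s s (cube s (mstar \<alpha> \<beta>) r0) (phiN \<alpha> \<beta> s)"
    and int: "integrable (lebesgue_s s) (rho_un \<alpha> \<beta> N s r)"
    and Z_pos: "0 < (\<integral>x. rho_un \<alpha> \<beta> N s r x \<partial>lebesgue_s s)"
  shows "strongly_log_concave_density s
           (\<lambda>x. rho_un \<alpha> \<beta> N s r x / (\<integral>x. rho_un \<alpha> \<beta> N s r x \<partial>lebesgue_s s))"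
proof -
  define Z where "Z = (\<integral>x. rho_un \<alpha> \<beta> N s r x \<partial>lebesgue_s s)"
  define A where "A = real N / real s"
  define \<sigma> where "\<sigma> = sqrt (real s / real N)"
  define R where "R = sqrt (real N / real s) * r"
  define P where "P x = phiN \<alpha> \<beta> s (\<lambda>i\<in>{..<s}. mstar \<alpha> \<beta> + \<sigma> * x i)" for x
  define P0 where "P0 = phiN \<alpha> \<beta> s (\<lambda>_. mstar \<alpha> \<beta>)"
  define U where "U x = A * P x + (ln Z - A * P0)" for x
  have A: "0 < A" and \<sigma>: "0 < \<sigma>" using s N by (simp_all add: A_def \<sigma>_def)
  have "\<sigma> * R = r"
    using s N by (simp add: \<sigma>_def R_def real_sqrt_mult[symmetric] flip: mult.assoc)
  then have U: "strongly_convex_on_s s (cube s 0 R) U"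
    unfolding U_def P_def using r by (intro strongly_convex_on_s_affine[OF conv A \<sigma>]) simp
  have density: "rho_un \<alpha> \<beta> N s r x / Z = (if x \<in> cube s 0 R then exp (- U x) else 0)" for x
  proof -
    have rho: "rho_un \<alpha> \<beta> N s r x = indicator (cube s 0 R) x * exp (- A * (P x - P0))"
      unfolding rho_un_rescaled R_def A_def P_def P0_def \<sigma>_def ..
    have "exp (- U x) = exp (- A * (P x - P0)) / Z"
      using Z_pos by (simp add: U_def Z_def exp_diff exp_minus exp_add field_simps)
    then show ?thesis by (simp add: rho)
  qed
  show ?thesis
    unfolding strongly_log_concave_density_def Z_def[symmetric]
  proof (intro conjI exI ballI)
    show "(\<lambda>x. rho_un \<alpha> \<beta> N s r x / Z) \<in> borel_measurable (lebesgue_s s)" by measurable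
    show "0 \<le> rho_un \<alpha> \<beta> N s r x / Z" for x using rho_un_nonneg Z_pos by (simp add: Z_def)
    show "integrable (lebesgue_s s) (\<lambda>x. rho_un \<alpha> \<beta> N s r x / Z)" using int by simp
    show "(\<integral>x. rho_un \<alpha> \<beta> N s r x / Z \<partial>lebesgue_s s) = 1" using Z_pos by (simp add: Z_def)
  qed (use U density in auto)
qed

lemma JN_ratio_eq_log_concave_expectation:
  assumes s: "0 < s" and N: "0 < N" and ab: "2 * \<alpha> < \<beta>" "0 \<le> \<alpha>" and r: "0 < r" "r \<le> r0"
    and conv: "strongly_convex_on_s s (cube s (mstar \<alpha> \<beta>) r0) (phiN \<alpha> \<beta> s)"
  shows "let Z = (\<integral>x. rho_un \<alpha> \<beta> N s r x \<partial>lebesgue_s s);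
             \<rho> = (\<lambda>x. rho_un \<alpha> \<beta> N s r x / Z)
         in strongly_log_concave_density s \<rho> \<and>
            JN \<alpha> \<beta> N s t r / JN \<alpha> \<beta> N s (\<lambda>_. 0) r = (\<integral>x. exp (inner_s s t x) * \<rho> x \<partial>lebesgue_s s)"
proof -
  have int: "integrable (lebesgue_s s) (rho_un \<alpha> \<beta> N s r)"
    using s N ab r by (intro integrable_rho_un) auto
  have Z_pos: "0 < (\<integral>x. rho_un \<alpha> \<beta> N s r x \<partial>lebesgue_s s)"
    using s N ab r by (intro integral_rho_un_pos) auto
  have "JN \<alpha> \<beta> N s (\<lambda>_. 0) r = (\<integral>x. rho_un \<alpha> \<beta> N s r x \<partial>lebesgue_s s)"
    using JN_eq_integral_exp_inner_rho_un[OF s N, of \<alpha> \<beta> "\<lambda>_. 0" r] by (simp add: inner_s_def)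
  then show ?thesis
    using strongly_log_concave_rho_un[OF s N r(2) conv int Z_pos]
      JN_eq_integral_exp_inner_rho_un[OF s N, of \<alpha> \<beta> t r]
    by (simp add: Let_def)
qed

theorem lemma7p1:
  fixes \<alpha> \<beta> :: real and s :: nat
  assumes "\<beta> > 2 * \<alpha>" and "2 * \<alpha> > 0" and "\<beta> + 2 * \<alpha> > 1" and "s \<ge> 1"
  shows "\<exists>r0>0. \<forall>N::nat. \<forall>t::nat \<Rightarrow> real. \<forall>r. N \<ge> 1 \<and> 0 < r \<and> r < r0 \<longrightarrow>
    (let Z = (\<integral>x. rho_un \<alpha> \<beta> N s r x \<partial>lebesgue_s s);
         \<rho> = (\<lambda>x. rho_un \<alpha> \<beta> N s r x / Z)
     in strongly_log_concave_density s \<rho> \<and>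
        JN \<alpha> \<beta> N s t r / JN \<alpha> \<beta> N s (\<lambda>_. 0) r
          = (\<integral>x. exp (inner_s s t x) * \<rho> x \<partial>lebesgue_s s))"
proof -
  have s: "0 < s" and ab: "2 * \<alpha> < \<beta>" "0 < \<alpha>" "1 < \<beta> + 2 * \<alpha>" using assms by auto
  obtain r0 where r0: "0 < r0" and conv: "strongly_convex_on_s s (cube s (mstar \<alpha> \<beta>) r0) (phiN \<alpha> \<beta> s)"
    using phiN_strongly_convex_near_mstar[OF s ab] by blast
  show ?thesis
    using r0 ab(2)
    by (intro exI[of _ r0] conjI allI impI JN_ratio_eq_log_concave_expectation[OF s _ ab(1) _ _ _ conv]) auto
qed

end
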